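(* Let $U\subseteq V$, let $H=(U,E(U))$ be the induced subgraph with inherited weights, let $(L,R)$ be a partition of $V\setminus U$ into two (possibly empty) sets, and let $f\in\ell^2(V,w)$ satisfy $f(v)=0$ for $v\notin U$ and $\sum_{v\in U}w_H(v)f(v)^2>0$. Suppose that for every $t$ with $0<t\le\max_v|f(v)|$, $$\min\big(\gamma(L\cup L_f(t),R\cup R_f(t)),\ \gamma(L\cup R_f(t),R\cup L_f(t))\big)>\gamma(L,R).$$ Then $\sqrt{72\,\mathcal R^+_H(f)}\ge\mathcal R^+_G(f)$.
   Context: $G=(V,E,w)$ finite undirected, positive edge weights, $w(v)=\sum_{u\sim v}w(u,v)\ge1$. $E(U)$ is the set of edges with both endpoints in $U$; $w_H(v)=\sum_{u\in U,\{u,v\}\in E}w(u,v)$. $w(E(S))$ is the weight of edges inside $S$; $w(E(S,T))$ the weight of edges between disjoint $S,T$. For disjoint $L,R\subseteq V$, the uncutness is $\gamma(L,R)=w(E(L))+w(E(R))+w(E(L\cup R,V\setminus(L\cup R)))$. For $t>0$, $L_f(t)=\{v:f(v)\le-t\}$, $R_f(t)=\{v:f(v)\ge t\}$. $\mathcal R^+_G(f)=\sum_{\{u,v\}\in E}w(u,v)(f(u)+f(v))^2/\sum_{v\in V}w(v)f(v)^2$ and $\mathcal R^+_H(f)=\sum_{\{u,v\}\in E(U)}w(u,v)(f(u)+f(v))^2/\sum_{v\in U}w_H(v)f(v)^2$. *)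

theory Defs
  imports Complex_Main
begin

definition wgraph :: "'a set \<Rightarrow> 'a set set \<Rightarrow> ('a set \<Rightarrow> real) \<Rightarrow> bool" where
  "wgraph V E w \<longleftrightarrow> finite V \<and>
     (\<forall>e\<in>E. \<exists>u v. u \<in> V \<and> v \<in> V \<and> u \<noteq> v \<and> e = {u, v}) \<and>
     (\<forall>e\<in>E. w e > 0)"

definition wdeg :: "'a set set \<Rightarrow> ('a set \<Rightarrow> real) \<Rightarrow> 'a \<Rightarrow> real" where
  "wdeg F w v = (\<Sum>e\<in>{e\<in>F. v \<in> e}. w e)"

definition edges_in :: "'a set set \<Rightarrow> 'a set \<Rightarrow> 'a set set" where
  "edges_in E S = {e\<in>E. e \<subseteq> S}"

definition edges_betw :: "'a set set \<Rightarrow> 'a set \<Rightarrow> 'a set \<Rightarrow> 'a set set" where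
  "edges_betw E S T = {e\<in>E. e \<inter> S \<noteq> {} \<and> e \<inter> T \<noteq> {}}"

definition wsum :: "('a set \<Rightarrow> real) \<Rightarrow> 'a set set \<Rightarrow> real" where
  "wsum w F = (\<Sum>e\<in>F. w e)"

definition uncut :: "'a set \<Rightarrow> 'a set set \<Rightarrow> ('a set \<Rightarrow> real) \<Rightarrow> 'a set \<Rightarrow> 'a set \<Rightarrow> real" where
  "uncut V E w L R = wsum w (edges_in E L) + wsum w (edges_in E R)
     + wsum w (edges_betw E (L \<union> R) (V - (L \<union> R)))"

definition Lset :: "'a set \<Rightarrow> ('a \<Rightarrow> real) \<Rightarrow> real \<Rightarrow> 'a set" where
  "Lset V f t = {v\<in>V. f v \<le> - t}"

definition Rset :: "'a set \<Rightarrow> ('a \<Rightarrow> real) \<Rightarrow> real \<Rightarrow> 'a set" where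
  "Rset V f t = {v\<in>V. f v \<ge> t}"

text \<open>Signless Rayleigh quotient of f on the graph with vertex set S and edge set F
  (edge weights w). For an edge e = {u,v}, the sum of f over e is f u + f v.\<close>
definition rayleigh_plus :: "'a set \<Rightarrow> 'a set set \<Rightarrow> ('a set \<Rightarrow> real) \<Rightarrow> ('a \<Rightarrow> real) \<Rightarrow> real" where
  "rayleigh_plus S F w f =
     (\<Sum>e\<in>F. w e * (\<Sum>x\<in>e. f x)\<^sup>2) / (\<Sum>v\<in>S. wdeg F w v * (f v)\<^sup>2)"

end

theory Submission
  imports Defs "HOL-Analysis.Analysis"
begin

text \<open>Write \<open>N/D\<close> for the signless Rayleigh quotient of \<open>f\<close> on \<open>H\<close> and \<open>X\<close> for the sum of
  \<open>w(u,v) f(u)\<^sup>2\<close> over the edges leaving \<open>U\<close> (with \<open>u \<in> U\<close>). Since \<open>f\<close> vanishes off \<open>U\<close>,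
  the quotient on \<open>G\<close> is \<open>(N + X)/(D + X)\<close>.

  Adding the threshold sets \<open>L\<^sub>f(t), R\<^sub>f(t)\<close> to \<open>(L, R)\<close> in both orientations changes the
  uncutness by twice the weight of the edges of \<open>H\<close> that meet the threshold sets without being
  split by them, minus the weight of the edges leaving \<open>U\<close> that meet them. The hypothesis says
  that this change is positive for every \<open>t\<close>; integrating against \<open>2t dt\<close> turns indicators
  \<open>[t \<le> c]\<close> into \<open>c\<^sup>2\<close> and gives \<open>X \<le> 2 \<Sum> w(u,v) (max(|f u|,|f v|)\<^sup>2 - c\<^sub>u\<^sub>v\<^sup>2)\<close> over \<open>E(U)\<close>,
  where \<open>c\<^sub>u\<^sub>v = min(|f u|,|f v|)\<close> if \<open>f\<close> changes sign on \<open>uv\<close> and \<open>c\<^sub>u\<^sub>v = 0\<close> otherwise.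
  Each summand is at most \<open>|f u + f v| (|f u| + |f v|)\<close>, so by Cauchy--Schwarz \<open>X\<^sup>2 \<le> 8 N D\<close>;
  together with \<open>N \<le> 2 D\<close> this bounds \<open>(N + X)/(D + X)\<close> by \<open>\<surd>(72 N/D)\<close>.\<close>

lemma sum_split_filter:
  assumes "finite A"
  shows "sum g A = sum g {x\<in>A. P x} + sum g {x\<in>A. \<not> P x}"
proof -
  have "A = {x\<in>A. P x} \<union> {x\<in>A. \<not> P x}" by blast
  with assms show ?thesis by (metis (no_types, lifting) sum.union_disjoint finite_Un disjoint_iff mem_Collect_eq)
qed

lemma sum_sq_le_two_sum_sq: "(p + q)\<^sup>2 \<le> 2 * (p\<^sup>2 + q\<^sup>2)" for p q :: real
  using zero_le_power2 [of "p - q"] by (simp add: power2_eq_square algebra_simps)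

lemma weighted_Cauchy_Schwarz_sum:
  fixes w a b :: "'i \<Rightarrow> real"
  assumes "\<forall>i\<in>I. 0 \<le> w i"
  shows "(\<Sum>i\<in>I. w i * a i * b i)\<^sup>2 \<le> (\<Sum>i\<in>I. w i * (a i)\<^sup>2) * (\<Sum>i\<in>I. w i * (b i)\<^sup>2)"
proof -
  have "(\<Sum>i\<in>I. (sqrt (w i) * a i) * (sqrt (w i) * b i))\<^sup>2
          \<le> (\<Sum>i\<in>I. (sqrt (w i) * a i)\<^sup>2) * (\<Sum>i\<in>I. (sqrt (w i) * b i)\<^sup>2)"
    by (rule Cauchy_Schwarz_ineq_sum)
  moreover have "(sqrt (w i) * a i) * (sqrt (w i) * b i) = w i * a i * b i"
    "(sqrt (w i) * a i)\<^sup>2 = w i * (a i)\<^sup>2" "(sqrt (w i) * b i)\<^sup>2 = w i * (b i)\<^sup>2" if "i \<in> I" for i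
    using assms that by (simp_all add: algebra_simps)
  ultimately show ?thesis by (metis (no_types, lifting) sum.cong)
qed

lemma has_integral_threshold:
  assumes "0 \<le> c" "c \<le> M"
  shows "((\<lambda>t::real. 2 * t * of_bool (t \<le> c)) has_integral c\<^sup>2) {0..M}"
proof -
  have "((\<lambda>t::real. 2 * t) has_integral c\<^sup>2 - 0\<^sup>2) {0..c}"
    by (rule fundamental_theorem_of_calculus [where f = "\<lambda>t. t\<^sup>2"])
       (use assms in \<open>auto intro!: derivative_eq_intros
          simp: has_real_derivative_iff_has_vector_derivative [symmetric]\<close>)
  then have "((\<lambda>t::real. if t \<in> cbox 0 c then 2 * t else 0) has_integral c\<^sup>2) (cbox 0 M)"
    by (intro has_integral_restrict_closed_subinterval) (use assms in auto)
  then have "((\<lambda>t::real. if t \<in> {0..c} then 2 * t else 0) has_integral c\<^sup>2) {0..M}"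
    by (simp only: cbox_interval)
  then show ?thesis
    by (rule has_integral_eq [rotated]) auto
qed

lemma sum_squares_nonneg_of_thresholds:
  fixes a b c d :: "'i \<Rightarrow> real"
  assumes "finite I" and levels: "\<forall>i\<in>I. c i \<in> {0..M} \<and> d i \<in> {0..M}"
    and thresholds: "\<And>t. 0 < t \<Longrightarrow> t \<le> M \<Longrightarrow>
      0 \<le> (\<Sum>i\<in>I. a i * of_bool (t \<le> c i) + b i * of_bool (t \<le> d i))"
  shows "0 \<le> (\<Sum>i\<in>I. a i * (c i)\<^sup>2 + b i * (d i)\<^sup>2)"
proof -
  have "((\<lambda>t. \<Sum>i\<in>I. a i * (2 * t * of_bool (t \<le> c i)) + b i * (2 * t * of_bool (t \<le> d i)))
          has_integral (\<Sum>i\<in>I. a i * (c i)\<^sup>2 + b i * (d i)\<^sup>2)) {0..M}"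
    using assms(1) levels
    by (intro has_integral_sum has_integral_add has_integral_mult_right has_integral_threshold) auto
  then have "((\<lambda>t. 2 * t * (\<Sum>i\<in>I. a i * of_bool (t \<le> c i) + b i * of_bool (t \<le> d i)))
          has_integral (\<Sum>i\<in>I. a i * (c i)\<^sup>2 + b i * (d i)\<^sup>2)) {0..M}"
    by (simp add: sum_distrib_left algebra_simps)
  then show ?thesis
  proof (rule has_integral_nonneg)
    fix t :: real assume "t \<in> {0..M}"
    then show "0 \<le> 2 * t * (\<Sum>i\<in>I. a i * of_bool (t \<le> c i) + b i * of_bool (t \<le> d i))"
      using thresholds [of t] by (cases "t = 0") auto
  qed
qed

lemma wgraph_edgeE:
  assumes "wgraph V E w" "e \<in> E"
  obtains x y where "e = {x, y}" "x \<noteq> y" "x \<in> V" "y \<in> V"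
  using assms unfolding wgraph_def by blast

lemma wgraph_finite_edges:
  assumes "wgraph V E w"
  shows "finite E"
proof (rule finite_subset)
  show "E \<subseteq> Pow V" using assms by (auto elim: wgraph_edgeE)
  show "finite (Pow V)" using assms by (simp add: wgraph_def)
qed

lemma sum_wdeg_mult:
  fixes g :: "'a \<Rightarrow> real"
  assumes "finite S" "finite F" "\<forall>e\<in>F. e \<subseteq> S"
  shows "(\<Sum>v\<in>S. wdeg F w v * g v) = (\<Sum>e\<in>F. w e * (\<Sum>v\<in>e. g v))"
proof -
  have "(\<Sum>v\<in>S. wdeg F w v * g v) = (\<Sum>v\<in>S. \<Sum>e\<in>F. if v \<in> e then w e * g v else 0)"
    unfolding wdeg_def sum_distrib_right using assms(2) by (simp add: sum.inter_filter)
  also have "\<dots> = (\<Sum>e\<in>F. \<Sum>v\<in>S. if v \<in> e then w e * g v else 0)"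
    by (rule sum.swap)
  also have "\<dots> = (\<Sum>e\<in>F. w e * (\<Sum>v\<in>e. g v))"
  proof (rule sum.cong [OF refl])
    fix e assume "e \<in> F"
    then have "{v\<in>S. v \<in> e} = e" using assms(3) by auto
    then show "(\<Sum>v\<in>S. if v \<in> e then w e * g v else 0) = w e * (\<Sum>v\<in>e. g v)"
      using assms(1) by (simp add: sum.inter_filter [symmetric] sum_distrib_left)
  qed
  finally show ?thesis .
qed

lemma wsum_filter:
  assumes "finite E"
  shows "wsum w {e\<in>E. P e} = (\<Sum>e\<in>E. w e * of_bool (P e))"
  unfolding wsum_def sum.inter_filter [OF assms] by (intro sum.cong) auto

definition edge_uncut :: "'a set \<Rightarrow> 'a set \<Rightarrow> 'a set \<Rightarrow> 'a set \<Rightarrow> real" where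
  "edge_uncut V L R e = of_bool (e \<subseteq> L) + of_bool (e \<subseteq> R)
     + of_bool (e \<inter> (L \<union> R) \<noteq> {} \<and> e \<inter> (V - (L \<union> R)) \<noteq> {})"

lemma uncut_eq_sum_edge_uncut:
  assumes "finite E"
  shows "uncut V E w L R = (\<Sum>e\<in>E. w e * edge_uncut V L R e)"
  using assms
  by (simp add: uncut_def edges_in_def edges_betw_def edge_uncut_def wsum_filter
        distrib_left sum.distrib)

lemma edge_uncut_extend:
  assumes "x \<in> V" "y \<in> V" "U \<subseteq> V" "L \<union> R = V - U" "L \<inter> R = {}"
    and "A \<subseteq> U" "B \<subseteq> U" "A \<inter> B = {}"
  shows "edge_uncut V (L \<union> A) (R \<union> B) {x, y} + edge_uncut V (L \<union> B) (R \<union> A) {x, y}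
           - 2 * edge_uncut V L R {x, y}
         = (if {x, y} \<subseteq> U then 2 * edge_uncut U A B {x, y}
            else - of_bool ({x, y} \<inter> (A \<union> B) \<noteq> {}))"
proof -
  have V: "V - (L \<union> R) = U" "V - (L \<union> A \<union> (R \<union> B)) = U - (A \<union> B)"
    "V - (L \<union> B \<union> (R \<union> A)) = U - (A \<union> B)"
    using assms by blast+
  have vertex_class: "(v \<in> L \<and> v \<notin> R \<and> v \<notin> U \<and> v \<notin> A \<and> v \<notin> B)
           \<or> (v \<notin> L \<and> v \<in> R \<and> v \<notin> U \<and> v \<notin> A \<and> v \<notin> B)
           \<or> (v \<notin> L \<and> v \<notin> R \<and> v \<in> U \<and> v \<in> A \<and> v \<notin> B)
           \<or> (v \<notin> L \<and> v \<notin> R \<and> v \<in> U \<and> v \<notin> A \<and> v \<in> B)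
           \<or> (v \<notin> L \<and> v \<notin> R \<and> v \<in> U \<and> v \<notin> A \<and> v \<notin> B)" if "v \<in> V" for v
    using assms that by blast
  show ?thesis
    using vertex_class [OF assms(1)] vertex_class [OF assms(2)] unfolding edge_uncut_def V
    by (elim disjE conjE) (simp_all add: insert_subset)
qed

text \<open>For \<open>t > 0\<close>, an edge \<open>{x, y}\<close> meets \<open>L\<^sub>f(t) \<union> R\<^sub>f(t)\<close> iff \<open>t \<le> top_level f {x, y}\<close>, and
  has one endpoint in each of these sets iff \<open>t \<le> cut_level f {x, y}\<close>.\<close>

definition top_level :: "('a \<Rightarrow> real) \<Rightarrow> 'a set \<Rightarrow> real" where
  "top_level f e = Max ((\<lambda>v. \<bar>f v\<bar>) ` e)"

definition cut_level :: "('a \<Rightarrow> real) \<Rightarrow> 'a set \<Rightarrow> real" where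
  "cut_level f e = (if \<exists>x\<in>e. \<exists>y\<in>e. f x * f y < 0 then Min ((\<lambda>v. \<bar>f v\<bar>) ` e) else 0)"

lemma top_level_pair [simp]: "top_level f {x, y} = max \<bar>f x\<bar> \<bar>f y\<bar>"
  by (simp add: top_level_def)

lemma cut_level_pair [simp]:
  "cut_level f {x, y} = (if f x * f y < 0 then min \<bar>f x\<bar> \<bar>f y\<bar> else 0)"
proof -
  have "(\<exists>u\<in>{x, y}. \<exists>v\<in>{x, y}. f u * f v < 0) \<longleftrightarrow> f x * f y < 0"
    by (auto simp: mult.commute)
  then show ?thesis by (simp add: cut_level_def)
qed

lemma top_cut_sq_diff_le:
  fixes p q :: real
  shows "(max \<bar>p\<bar> \<bar>q\<bar>)\<^sup>2 - (if p * q < 0 then min \<bar>p\<bar> \<bar>q\<bar> else 0)\<^sup>2 \<le> \<bar>p + q\<bar> * (\<bar>p\<bar> + \<bar>q\<bar>)"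
proof (cases "p * q < 0")
  case True
  have "(max a b)\<^sup>2 - (min a b)\<^sup>2 = \<bar>a - b\<bar> * (a + b)" if "0 \<le> a" "0 \<le> b" for a b :: real
    using that by (auto simp: max_def min_def power2_eq_square algebra_simps)
  moreover have "\<bar>p + q\<bar> = \<bar>\<bar>p\<bar> - \<bar>q\<bar>\<bar>" using True by (auto simp: mult_less_0_iff)
  ultimately show ?thesis using True by simp
next
  case False
  then have "\<bar>p + q\<bar> = \<bar>p\<bar> + \<bar>q\<bar>" by (auto simp: mult_less_0_iff not_less abs_if)
  moreover have "(max \<bar>p\<bar> \<bar>q\<bar>)\<^sup>2 \<le> (\<bar>p\<bar> + \<bar>q\<bar>)\<^sup>2" by (rule power_mono) auto
  ultimately show ?thesis using False by (simp add: power2_eq_square)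
qed

lemma edge_uncut_thresholds:
  assumes "U \<subseteq> V" "x \<in> U" "y \<in> U" "0 < t"
  shows "edge_uncut U (Lset V f t) (Rset V f t) {x, y}
         = of_bool (t \<le> top_level f {x, y}) - of_bool (t \<le> cut_level f {x, y})"
  using assms
  by (cases "f x \<le> -t"; cases "f y \<le> -t"; cases "f x \<ge> t"; cases "f y \<ge> t"; cases "f x * f y < 0")
     (auto simp: edge_uncut_def Lset_def Rset_def abs_if mult_less_0_iff)

lemma pair_meets_thresholds_iff:
  assumes "x \<in> V" "y \<in> V" "0 < t"
  shows "{x, y} \<inter> (Lset V f t \<union> Rset V f t) \<noteq> {} \<longleftrightarrow> t \<le> top_level f {x, y}"
  using assms by (auto simp: Lset_def Rset_def abs_if)

lemma uncut_threshold_gain: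
  assumes G: "wgraph V E w" and "U \<subseteq> V" "L \<union> R = V - U" "L \<inter> R = {}"
    and f0: "\<forall>v\<in>V - U. f v = 0" and "0 < t"
  shows "uncut V E w (L \<union> Lset V f t) (R \<union> Rset V f t) + uncut V E w (L \<union> Rset V f t) (R \<union> Lset V f t)
           - 2 * uncut V E w L R
         = (\<Sum>e\<in>E. w e * (if e \<subseteq> U then 2 * (of_bool (t \<le> top_level f e) - of_bool (t \<le> cut_level f e))
                               else - of_bool (t \<le> top_level f e)))"
proof -
  let ?A = "Lset V f t" and ?B = "Rset V f t"
  have AB: "?A \<subseteq> U" "?B \<subseteq> U" "?A \<inter> ?B = {}"
    using f0 \<open>0 < t\<close> by (force simp: Lset_def Rset_def)+
  have "edge_uncut V (L \<union> ?A) (R \<union> ?B) e + edge_uncut V (L \<union> ?B) (R \<union> ?A) e - 2 * edge_uncut V L R e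
      = (if e \<subseteq> U then 2 * (of_bool (t \<le> top_level f e) - of_bool (t \<le> cut_level f e))
         else - of_bool (t \<le> top_level f e))" if "e \<in> E" for e
  proof -
    obtain x y where e: "e = {x, y}" "x \<in> V" "y \<in> V" using G \<open>e \<in> E\<close> by (rule wgraph_edgeE)
    show ?thesis
      using edge_uncut_extend [OF e(2,3) assms(2-4) AB] edge_uncut_thresholds [OF \<open>U \<subseteq> V\<close>, of x y t f]
        pair_meets_thresholds_iff [OF e(2,3) \<open>0 < t\<close>, of f] e(1) \<open>0 < t\<close>
      by auto
  qed
  moreover have "uncut V E w (L \<union> ?A) (R \<union> ?B) + uncut V E w (L \<union> ?B) (R \<union> ?A) - 2 * uncut V E w L R
      = (\<Sum>e\<in>E. w e * (edge_uncut V (L \<union> ?A) (R \<union> ?B) e + edge_uncut V (L \<union> ?B) (R \<union> ?A) e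
                          - 2 * edge_uncut V L R e))"
    using wgraph_finite_edges [OF G]
    by (simp add: uncut_eq_sum_edge_uncut sum.distrib sum_subtractf sum_distrib_left algebra_simps)
  ultimately show ?thesis by simp
qed

text \<open>If \<open>f\<close> vanishes off \<open>U\<close>, the summand of an edge leaving \<open>U\<close> is \<open>w(u,v) f(u)\<^sup>2\<close> with \<open>u \<in> U\<close>.\<close>

definition boundary_energy :: "'a set set \<Rightarrow> ('a set \<Rightarrow> real) \<Rightarrow> 'a set \<Rightarrow> ('a \<Rightarrow> real) \<Rightarrow> real" where
  "boundary_energy E w U f = (\<Sum>e\<in>{e\<in>E. \<not> e \<subseteq> U}. w e * (top_level f e)\<^sup>2)"

lemma boundary_energy_le_level_energy:
  assumes G: "wgraph V E w" and "U \<subseteq> V" "L \<union> R = V - U" "L \<inter> R = {}"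
    and f0: "\<forall>v\<in>V - U. f v = 0"
    and cond: "\<forall>t. 0 < t \<and> t \<le> Max ((\<lambda>v. \<bar>f v\<bar>) ` V) \<longrightarrow>
        min (uncut V E w (L \<union> Lset V f t) (R \<union> Rset V f t))
            (uncut V E w (L \<union> Rset V f t) (R \<union> Lset V f t)) > uncut V E w L R"
  shows "boundary_energy E w U f
           \<le> 2 * (\<Sum>e\<in>edges_in E U. w e * ((top_level f e)\<^sup>2 - (cut_level f e)\<^sup>2))"
proof -
  define M where "M = Max ((\<lambda>v. \<bar>f v\<bar>) ` V)"
  define a where "a e = (if e \<subseteq> U then 2 * w e else - w e)" for e
  define b where "b e = (if e \<subseteq> U then - 2 * w e else 0)" for e
  have "finite E" "finite V" using G by (simp_all add: wgraph_finite_edges wgraph_def)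
  have levels: "\<forall>e\<in>E. top_level f e \<in> {0..M} \<and> cut_level f e \<in> {0..M}"
  proof
    fix e assume "e \<in> E"
    then obtain x y where "e = {x, y}" "x \<in> V" "y \<in> V" using G by (elim wgraph_edgeE)
    moreover have "\<bar>f x\<bar> \<le> M" "\<bar>f y\<bar> \<le> M"
      using \<open>finite V\<close> \<open>x \<in> V\<close> \<open>y \<in> V\<close> by (auto simp: M_def)
    ultimately show "top_level f e \<in> {0..M} \<and> cut_level f e \<in> {0..M}" by auto
  qed
  have "0 \<le> (\<Sum>e\<in>E. a e * (top_level f e)\<^sup>2 + b e * (cut_level f e)\<^sup>2)"
  proof (rule sum_squares_nonneg_of_thresholds [OF \<open>finite E\<close> levels])
    fix t :: real assume t: "0 < t" "t \<le> M"
    have "0 < uncut V E w (L \<union> Lset V f t) (R \<union> Rset V f t)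
              + uncut V E w (L \<union> Rset V f t) (R \<union> Lset V f t) - 2 * uncut V E w L R"
      using cond t by (auto simp: M_def)
    also have "\<dots> = (\<Sum>e\<in>E. a e * of_bool (t \<le> top_level f e) + b e * of_bool (t \<le> cut_level f e))"
      unfolding uncut_threshold_gain [OF assms(1-5) t(1)] a_def b_def
      by (intro sum.cong) (auto simp: algebra_simps)
    finally show "0 \<le> (\<Sum>e\<in>E. a e * of_bool (t \<le> top_level f e) + b e * of_bool (t \<le> cut_level f e))"
      by simp
  qed
  also have "\<dots> = (\<Sum>e\<in>edges_in E U. 2 * (w e * ((top_level f e)\<^sup>2 - (cut_level f e)\<^sup>2)))
                  + (\<Sum>e\<in>{e\<in>E. \<not> e \<subseteq> U}. - (w e * (top_level f e)\<^sup>2))"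
    unfolding sum_split_filter [OF \<open>finite E\<close>, of _ "\<lambda>e. e \<subseteq> U"] edges_in_def a_def b_def
    by (intro arg_cong2 [where f = "(+)"] sum.cong) (auto simp: algebra_simps)
  also have "\<dots> = 2 * (\<Sum>e\<in>edges_in E U. w e * ((top_level f e)\<^sup>2 - (cut_level f e)\<^sup>2))
                  - boundary_energy E w U f"
    by (simp add: boundary_energy_def sum_distrib_left sum_negf)
  finally show ?thesis by simp
qed

lemma edge_sum_sq_le:
  fixes f :: "'a \<Rightarrow> real"
  assumes edges: "\<forall>e\<in>F. \<exists>x y. x \<noteq> y \<and> e = {x, y}" and "\<forall>e\<in>F. 0 \<le> w e"
  shows "(\<Sum>e\<in>F. w e * (\<Sum>x\<in>e. f x)\<^sup>2) \<le> 2 * (\<Sum>e\<in>F. w e * (\<Sum>x\<in>e. (f x)\<^sup>2))"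
proof -
  have "w e * (\<Sum>x\<in>e. f x)\<^sup>2 \<le> 2 * (w e * (\<Sum>x\<in>e. (f x)\<^sup>2))" if "e \<in> F" for e
  proof -
    obtain x y where "x \<noteq> y" "e = {x, y}" using edges \<open>e \<in> F\<close> by blast
    then have "(\<Sum>x\<in>e. f x)\<^sup>2 \<le> 2 * (\<Sum>x\<in>e. (f x)\<^sup>2)"
      using sum_sq_le_two_sum_sq [of "f x" "f y"] by simp
    then show ?thesis using assms(2) \<open>e \<in> F\<close> by (simp add: mult_left_mono mult.left_commute)
  qed
  then show ?thesis by (simp add: sum_distrib_left sum_mono)
qed

lemma level_energy_sq_le:
  fixes f :: "'a \<Rightarrow> real"
  assumes edges: "\<forall>e\<in>F. \<exists>x y. x \<noteq> y \<and> e = {x, y}" and "\<forall>e\<in>F. 0 \<le> w e"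
  shows "(\<Sum>e\<in>F. w e * ((top_level f e)\<^sup>2 - (cut_level f e)\<^sup>2))\<^sup>2
           \<le> 2 * (\<Sum>e\<in>F. w e * (\<Sum>x\<in>e. f x)\<^sup>2) * (\<Sum>e\<in>F. w e * (\<Sum>x\<in>e. (f x)\<^sup>2))"
proof -
  define S where "S = (\<Sum>e\<in>F. w e * ((top_level f e)\<^sup>2 - (cut_level f e)\<^sup>2))"
  define T where "T = (\<Sum>e\<in>F. w e * \<bar>\<Sum>x\<in>e. f x\<bar> * (\<Sum>x\<in>e. \<bar>f x\<bar>))"
  have edge: "0 \<le> (top_level f e)\<^sup>2 - (cut_level f e)\<^sup>2
      \<and> (top_level f e)\<^sup>2 - (cut_level f e)\<^sup>2 \<le> \<bar>\<Sum>x\<in>e. f x\<bar> * (\<Sum>x\<in>e. \<bar>f x\<bar>)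
      \<and> (\<Sum>x\<in>e. \<bar>f x\<bar>)\<^sup>2 \<le> 2 * (\<Sum>x\<in>e. (f x)\<^sup>2)" if "e \<in> F" for e
  proof -
    obtain x y where "x \<noteq> y" "e = {x, y}" using edges \<open>e \<in> F\<close> by blast
    have "0 \<le> cut_level f e" "cut_level f e \<le> top_level f e" using \<open>e = {x, y}\<close> by auto
    then have "(cut_level f e)\<^sup>2 \<le> (top_level f e)\<^sup>2" by (simp add: power_mono)
    moreover have "(top_level f e)\<^sup>2 - (cut_level f e)\<^sup>2 \<le> \<bar>\<Sum>x\<in>e. f x\<bar> * (\<Sum>x\<in>e. \<bar>f x\<bar>)"
      using top_cut_sq_diff_le [of "f x" "f y"] \<open>x \<noteq> y\<close> unfolding \<open>e = {x, y}\<close> by simp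
    moreover have "(\<Sum>x\<in>e. \<bar>f x\<bar>)\<^sup>2 \<le> 2 * (\<Sum>x\<in>e. (f x)\<^sup>2)"
      using sum_sq_le_two_sum_sq [of "\<bar>f x\<bar>" "\<bar>f y\<bar>"] \<open>x \<noteq> y\<close> unfolding \<open>e = {x, y}\<close> by simp
    ultimately show ?thesis by simp
  qed
  have "0 \<le> S" "S \<le> T"
    unfolding S_def T_def using edge assms(2)
    by (auto intro!: sum_nonneg sum_mono mult_left_mono simp: mult.assoc)
  then have "S\<^sup>2 \<le> T\<^sup>2" by (simp add: power_mono)
  also have "T\<^sup>2 \<le> (\<Sum>e\<in>F. w e * (\<Sum>x\<in>e. f x)\<^sup>2) * (\<Sum>e\<in>F. w e * (\<Sum>x\<in>e. \<bar>f x\<bar>)\<^sup>2)"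
    using weighted_Cauchy_Schwarz_sum [OF assms(2), of "\<lambda>e. \<bar>\<Sum>x\<in>e. f x\<bar>" "\<lambda>e. \<Sum>x\<in>e. \<bar>f x\<bar>"]
    by (simp add: T_def)
  also have "\<dots> \<le> (\<Sum>e\<in>F. w e * (\<Sum>x\<in>e. f x)\<^sup>2) * (\<Sum>e\<in>F. 2 * (w e * (\<Sum>x\<in>e. (f x)\<^sup>2)))"
  proof (rule mult_left_mono)
    show "(\<Sum>e\<in>F. w e * (\<Sum>x\<in>e. \<bar>f x\<bar>)\<^sup>2) \<le> (\<Sum>e\<in>F. 2 * (w e * (\<Sum>x\<in>e. (f x)\<^sup>2)))"
      using edge assms(2) by (intro sum_mono) (simp add: mult_left_mono mult.left_commute)
    show "0 \<le> (\<Sum>e\<in>F. w e * (\<Sum>x\<in>e. f x)\<^sup>2)" using assms(2) by (simp add: sum_nonneg)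
  qed
  also have "\<dots> = 2 * (\<Sum>e\<in>F. w e * (\<Sum>x\<in>e. f x)\<^sup>2) * (\<Sum>e\<in>F. w e * (\<Sum>x\<in>e. (f x)\<^sup>2))"
    by (simp add: sum_distrib_left [symmetric])
  finally show ?thesis by (simp only: S_def)
qed

lemma rayleigh_plus_split:
  assumes G: "wgraph V E w" and f0: "\<forall>v\<in>V - U. f v = 0"
  shows "rayleigh_plus V E w f
    = ((\<Sum>e\<in>edges_in E U. w e * (\<Sum>x\<in>e. f x)\<^sup>2) + boundary_energy E w U f)
      / ((\<Sum>e\<in>edges_in E U. w e * (\<Sum>x\<in>e. (f x)\<^sup>2)) + boundary_energy E w U f)"
proof -
  have "finite E" "finite V" using G by (simp_all add: wgraph_finite_edges wgraph_def)
  have boundary: "(\<Sum>x\<in>e. f x)\<^sup>2 = (top_level f e)\<^sup>2 \<and> (\<Sum>x\<in>e. (f x)\<^sup>2) = (top_level f e)\<^sup>2"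
    if "e \<in> E" "\<not> e \<subseteq> U" for e
  proof -
    obtain x y where "e = {x, y}" "x \<noteq> y" "x \<in> V" "y \<in> V" using G \<open>e \<in> E\<close> by (rule wgraph_edgeE)
    moreover have "f x = 0 \<or> f y = 0" using f0 that calculation by auto
    ultimately show ?thesis by auto
  qed
  have split: "sum g E = sum g (edges_in E U) + sum g {e\<in>E. \<not> e \<subseteq> U}" for g :: "'a set \<Rightarrow> real"
    unfolding edges_in_def by (rule sum_split_filter [OF \<open>finite E\<close>])
  have "(\<Sum>e\<in>E. w e * (\<Sum>x\<in>e. f x)\<^sup>2)
      = (\<Sum>e\<in>edges_in E U. w e * (\<Sum>x\<in>e. f x)\<^sup>2) + boundary_energy E w U f"
    unfolding split [of "\<lambda>e. w e * (\<Sum>x\<in>e. f x)\<^sup>2"] boundary_energy_def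
    using boundary by (intro arg_cong2 [where f = "(+)"] sum.cong) auto
  moreover have "(\<Sum>v\<in>V. wdeg E w v * (f v)\<^sup>2) = (\<Sum>e\<in>E. w e * (\<Sum>x\<in>e. (f x)\<^sup>2))"
    using \<open>finite V\<close> \<open>finite E\<close> G by (intro sum_wdeg_mult) (auto elim: wgraph_edgeE)
  moreover have "(\<Sum>e\<in>E. w e * (\<Sum>x\<in>e. (f x)\<^sup>2))
      = (\<Sum>e\<in>edges_in E U. w e * (\<Sum>x\<in>e. (f x)\<^sup>2)) + boundary_energy E w U f"
    unfolding split [of "\<lambda>e. w e * (\<Sum>x\<in>e. (f x)\<^sup>2)"] boundary_energy_def
    using boundary by (intro arg_cong2 [where f = "(+)"] sum.cong) auto
  ultimately show ?thesis by (simp add: rayleigh_plus_def)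
qed

lemma shifted_ratio_le_sqrt:
  fixes N D X :: real
  assumes "0 < D" "0 \<le> X" "0 \<le> N" "N \<le> 2 * D" "X\<^sup>2 \<le> 8 * N * D"
  shows "(N + X) / (D + X) \<le> sqrt (72 * (N / D))"
proof (rule real_le_rsqrt)
  have "0 \<le> (N + X) / (D + X)" "(N + X) / (D + X) \<le> (N + X) / D"
    using assms by (auto intro: divide_left_mono)
  then have "((N + X) / (D + X))\<^sup>2 \<le> ((N + X) / D)\<^sup>2" by (rule power_mono [rotated])
  also have "\<dots> \<le> 72 * N * D / D\<^sup>2"
  proof -
    have "(N + X)\<^sup>2 \<le> 2 * N\<^sup>2 + 2 * X\<^sup>2" using sum_sq_le_two_sum_sq [of N X] by simp
    also have "\<dots> \<le> 72 * N * D"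
    proof -
      have "N\<^sup>2 \<le> 2 * N * D" using mult_left_mono [OF assms(4) assms(3)] by (simp add: power2_eq_square)
      moreover have "0 \<le> N * D" using assms by simp
      ultimately show ?thesis using assms(5) by linarith
    qed
    finally show ?thesis by (simp add: power_divide divide_right_mono)
  qed
  also have "\<dots> = 72 * (N / D)" using assms by (simp add: power2_eq_square)
  finally show "((N + X) / (D + X))\<^sup>2 \<le> 72 * (N / D)" .
qed

theorem mainTheorem14:
  fixes V U L R :: "'a set" and E :: "'a set set" and w :: "'a set \<Rightarrow> real"
    and f :: "'a \<Rightarrow> real"
  assumes G: "wgraph V E w"
    and deg: "\<forall>v\<in>V. wdeg E w v \<ge> 1"
    and UV: "U \<subseteq> V"
    and LR: "L \<union> R = V - U" "L \<inter> R = {}"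
    and f0: "\<forall>v\<in>V - U. f v = 0"
    and fpos: "(\<Sum>v\<in>U. wdeg (edges_in E U) w v * (f v)\<^sup>2) > 0"
    and cond: "\<forall>t. 0 < t \<and> t \<le> Max ((\<lambda>v. \<bar>f v\<bar>) ` V) \<longrightarrow>
        min (uncut V E w (L \<union> Lset V f t) (R \<union> Rset V f t))
            (uncut V E w (L \<union> Rset V f t) (R \<union> Lset V f t)) > uncut V E w L R"
  shows "sqrt (72 * rayleigh_plus U (edges_in E U) w f) \<ge> rayleigh_plus V E w f"
proof -
  let ?EU = "edges_in E U"
  define N where "N = (\<Sum>e\<in>?EU. w e * (\<Sum>x\<in>e. f x)\<^sup>2)"
  define D where "D = (\<Sum>e\<in>?EU. w e * (\<Sum>x\<in>e. (f x)\<^sup>2))"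
  define S where "S = (\<Sum>e\<in>?EU. w e * ((top_level f e)\<^sup>2 - (cut_level f e)\<^sup>2))"
  define X where "X = boundary_energy E w U f"
  have EU: "\<forall>e\<in>?EU. \<exists>x y. x \<noteq> y \<and> e = {x, y}" "\<forall>e\<in>?EU. 0 \<le> w e"
    using G by (auto simp: edges_in_def wgraph_def less_imp_le elim!: wgraph_edgeE [OF G])
  have "D = (\<Sum>v\<in>U. wdeg ?EU w v * (f v)\<^sup>2)"
    using G UV finite_subset [OF UV] wgraph_finite_edges [OF G]
    by (simp add: D_def sum_wdeg_mult wgraph_def edges_in_def)
  then have "0 < D" "rayleigh_plus U ?EU w f = N / D"
    using fpos by (simp_all add: rayleigh_plus_def N_def)
  have "0 \<le> X"
    unfolding X_def boundary_energy_def using G by (intro sum_nonneg) (simp add: wgraph_def less_imp_le)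
  have "0 \<le> N" using EU(2) by (simp add: N_def sum_nonneg)
  have "N \<le> 2 * D" using edge_sum_sq_le [OF EU] by (simp add: N_def D_def)
  have "X \<le> 2 * S" using boundary_energy_le_level_energy [OF G UV LR f0 cond] by (simp add: X_def S_def)
  moreover have "S\<^sup>2 \<le> 2 * N * D" using level_energy_sq_le [OF EU] by (simp add: N_def D_def S_def)
  ultimately have "X\<^sup>2 \<le> 8 * N * D"
    using \<open>0 \<le> X\<close> power_mono [of X "2 * S" 2] by (simp add: power_mult_distrib)
  moreover have "rayleigh_plus V E w f = (N + X) / (D + X)"
    using rayleigh_plus_split [OF G f0] by (simp add: N_def D_def X_def)
  ultimately show ?thesis
    using shifted_ratio_le_sqrt \<open>0 < D\<close> \<open>0 \<le> X\<close> \<open>0 \<le> N\<close> \<open>N \<le> 2 * D\<close>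
      \<open>rayleigh_plus U ?EU w f = N / D\<close> by simp
qed

end
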